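(* For each finite set $I$, the linear map $\mathcal T:\mathbf{GP}[I]\to\mathcal R$ defined on generalized permutahedra $P\subseteq\mathbb R^I$ by $$\mathcal T(P)=\sum_{A\subseteq I}x_1^{|A|}\,y_1^{\mu_P(A)}\,x_2^{|I\setminus A|}\,y_2^{\mu_P(I)-\mu_P(A)}$$ (the universal Tutte character of $\mathbf{GP}$) is a strong valuation.
   Context: $\mathbf{GP}[I]$ is the real vector space with basis the generalized permutahedra in $\mathbb R^I$, i.e. polytopes $\{x:\sum_{i\in I}x_i=z(I),\ \sum_{i\in A}x_i\le z(A)\ \forall A\subseteq I\}$ for submodular $z:2^I\to\mathbb R$. For such $P$, $\mu_P(A)=\max_{x\in P}\sum_{i\in A}x_i$ (so $\mu_P(\emptyset)=0$). $\mathcal R$ is the real group algebra of monomials $x_1^ax_2^by_1^cy_2^d$ with $a,b\in\mathbb Z_{\ge0}$, $c,d\in\mathbb R$. A linear map $f:\mathbf{GP}[I]\to\mathcal R$ is a strong valuation if there is a linear map $\hat f$ on the span of the indicator functions $\mathbb 1_P$ of generalized permutahedra $P\subseteq\mathbb R^I$ with $f(P)=\hat f(\mathbb 1_P)$ for all $P$. *)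

theory Defs
  imports "HOL-Analysis.Analysis"
begin

text \<open>Points of R^I are functions 'i \<Rightarrow> real, where the finite ground set I is the
  universe of a finite type 'i.\<close>

definition submodular :: "('i set \<Rightarrow> real) \<Rightarrow> bool" where
  "submodular z \<longleftrightarrow> (\<forall>A B. z (A \<union> B) + z (A \<inter> B) \<le> z A + z B)"

definition gen_perm_of :: "('i::finite set \<Rightarrow> real) \<Rightarrow> ('i \<Rightarrow> real) set" where
  "gen_perm_of z = {x. sum x UNIV = z UNIV \<and> (\<forall>A. sum x A \<le> z A)}"

definition is_gen_perm :: "('i::finite \<Rightarrow> real) set \<Rightarrow> bool" where
  "is_gen_perm P \<longleftrightarrow> (\<exists>z. submodular z \<and> z {} = 0 \<and> P = gen_perm_of z)"

definition mu :: "('i::finite \<Rightarrow> real) set \<Rightarrow> 'i set \<Rightarrow> real" where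
  "mu P A = (SUP x\<in>P. sum x A)"

text \<open>The group algebra R: elements are finitely supported real functions on exponent
  vectors (a,b,c,d) (monomial x1^a x2^b y1^c y2^d), with pointwise vector operations.\<close>
type_synonym monom = "nat \<times> nat \<times> real \<times> real"
type_synonym Ralg = "monom \<Rightarrow> real"

definition R_monomial :: "nat \<Rightarrow> nat \<Rightarrow> real \<Rightarrow> real \<Rightarrow> Ralg" where
  "R_monomial a b c d = (\<lambda>m. if m = (a, b, c, d) then 1 else 0)"

definition tutte_char :: "('i::finite \<Rightarrow> real) set \<Rightarrow> Ralg" where
  "tutte_char P = (\<lambda>m. \<Sum>A\<in>(UNIV :: 'i set set).
      R_monomial (card A) (card (UNIV - A)) (mu P A) (mu P UNIV - mu P A) m)"

definition gp_indicator_span :: "(('i::finite \<Rightarrow> real) \<Rightarrow> real) set" where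
  "gp_indicator_span = {h. \<exists>(K::nat set) c Q. finite K \<and> (\<forall>k\<in>K. is_gen_perm (Q k)) \<and>
      h = (\<lambda>x. \<Sum>k\<in>K. c k * indicator (Q k) x)}"

definition linear_on_span :: "((('i::finite \<Rightarrow> real) \<Rightarrow> real) \<Rightarrow> Ralg) \<Rightarrow> bool" where
  "linear_on_span g \<longleftrightarrow>
     (\<forall>u\<in>gp_indicator_span. \<forall>v\<in>gp_indicator_span.
         g (\<lambda>x. u x + v x) = (\<lambda>m. g u m + g v m)) \<and>
     (\<forall>c. \<forall>u\<in>gp_indicator_span. g (\<lambda>x. c * u x) = (\<lambda>m. c * g u m))"

text \<open>A linear map on GP[I] is determined by its values on the basis (the generalized
  permutahedra), so it is given as a function on these sets.\<close>
definition strong_valuation :: "(('i::finite \<Rightarrow> real) set \<Rightarrow> Ralg) \<Rightarrow> bool" where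
  "strong_valuation f \<longleftrightarrow>
     (\<exists>g. linear_on_span g \<and> (\<forall>P. is_gen_perm P \<longrightarrow> f P = g (indicator P)))"

end

(*
  Hadwiger's Euler characteristic chi is a linear functional on the span of indicator functions
  of compact convex sets with chi(1_K) = [K nonempty]; it is built by iterated right jumps along
  the coordinate axes, since a compact convex slice of a line is a closed interval whose indicator
  jumps exactly once, at its right end point. The coefficient of x1^a x2^b y1^c y2^d in T(P)
  counts the sets A with |A| = a, |I - A| = b, mu_P(I) = c + d and mu_P(A) = c. For compact convex
  P, the function s |-> chi(1_P * 1_{sum_A >= s, sum_I = c + d}) is the indicator of a half-line
  ending at the maximum of sum_A over P on the hyperplane sum_I = c + d, so its right jump at c
  detects exactly that condition. This jump is linear in 1_P, which gives the extension of T.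
*)
theory Submission
  imports Defs "HOL-Library.Groups_Big_Fun"
begin

section \<open>Right jumps and finitely supported sums\<close>

lemma Sum_any_sum_swap:
  fixes f :: "'k \<Rightarrow> 'a \<Rightarrow> 'b::comm_monoid_add"
  assumes "finite K" and "\<And>k. k \<in> K \<Longrightarrow> finite {t. f k t \<noteq> 0}"
  shows "Sum_any (\<lambda>t. \<Sum>k\<in>K. f k t) = (\<Sum>k\<in>K. Sum_any (f k))"
proof -
  define U where "U = (\<Union>k\<in>K. {t. f k t \<noteq> 0})"
  have U: "finite U" using assms unfolding U_def by blast
  have "Sum_any (\<lambda>t. \<Sum>k\<in>K. f k t) = (\<Sum>t\<in>U. \<Sum>k\<in>K. f k t)"
    by (rule Sum_any.expand_superset[OF U])
      (auto simp: U_def elim: sum.not_neutral_contains_not_neutral)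
  also have "\<dots> = (\<Sum>k\<in>K. \<Sum>t\<in>U. f k t)"
    by (rule sum.swap)
  also have "\<dots> = (\<Sum>k\<in>K. Sum_any (f k))"
    by (intro sum.cong refl Sum_any.expand_superset[symmetric] U) (auto simp: U_def)
  finally show ?thesis .
qed

lemma Sum_any_sum_point_masses:
  fixes c :: "'k \<Rightarrow> 'a::semiring_1"
  assumes "finite K"
  shows "Sum_any (\<lambda>t. \<Sum>k\<in>K. c k * of_bool (P k \<and> t = m k)) = (\<Sum>k\<in>K. c k * of_bool (P k))"
proof -
  have point_mass: "Sum_any (\<lambda>t. c k * of_bool (P k \<and> t = m k)) = c k * of_bool (P k)" for k
  proof -
    have "(\<lambda>t. c k * of_bool (P k \<and> t = m k)) = (\<lambda>t. if t = m k then c k * of_bool (P k) else 0)"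
      by auto
    then show ?thesis
      by (simp only: Sum_any.delta)
  qed
  have "Sum_any (\<lambda>t. \<Sum>k\<in>K. c k * of_bool (P k \<and> t = m k)) =
      (\<Sum>k\<in>K. Sum_any (\<lambda>t. c k * of_bool (P k \<and> t = m k)))"
    by (rule Sum_any_sum_swap[OF assms], rule finite_subset[of _ "{m _}"]) auto
  then show ?thesis
    by (simp only: point_mass)
qed

definition right_jump :: "(real \<Rightarrow> real) \<Rightarrow> real \<Rightarrow> real" where
  "right_jump f t = f t - Lim (at_right t) f"

lemma right_jump_sum:
  assumes "finite K" and "\<And>k. k \<in> K \<Longrightarrow> (f k \<longlongrightarrow> L k) (at_right t)"
  shows "right_jump (\<lambda>s. \<Sum>k\<in>K. c k * f k s) t = (\<Sum>k\<in>K. c k * (f k t - L k))"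
proof -
  have "((\<lambda>s. \<Sum>k\<in>K. c k * f k s) \<longlongrightarrow> (\<Sum>k\<in>K. c k * L k)) (at_right t)"
    using assms(2) by (intro tendsto_sum tendsto_mult tendsto_const)
  then have "Lim (at_right t) (\<lambda>s. \<Sum>k\<in>K. c k * f k s) = (\<Sum>k\<in>K. c k * L k)"
    by (intro tendsto_Lim) simp
  then show ?thesis
    by (simp add: right_jump_def sum_subtractf right_diff_distrib)
qed

lemma tendsto_indicator_atMost_at_right:
  fixes M t :: real
  shows "(indicator {..M} \<longlongrightarrow> (of_bool (t < M) :: real)) (at_right t)"
proof (rule tendsto_eventually)
  show "eventually (\<lambda>s. indicator {..M} s = (of_bool (t < M) :: real)) (at_right t)"
    unfolding eventually_at_right_field
    by (intro exI[of _ "if t < M then M else t + 1"]) (simp add: indicator_def)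
qed

lemma tendsto_indicator_compact_interval_at_right:
  fixes S :: "real set"
  assumes "compact S" and "is_interval S"
  shows "(indicator S \<longlongrightarrow> indicator S t - (of_bool (S \<noteq> {} \<and> t = Sup S) :: real))
    (at_right t)"
proof -
  obtain a b where S: "S = {a..b}"
    using assms connected_compact_interval_1 is_interval_connected_1 by blast
  have "eventually (\<lambda>s. indicator {a..b} s = (of_bool (a \<le> t \<and> t < b) :: real)) (at_right t)"
    unfolding eventually_at_right_field
    by (intro exI[of _ "if t < a then a else if t < b then b else t + 1"]) auto
  moreover have "indicator {a..b} t - of_bool ({a..b} \<noteq> {} \<and> t = Sup {a..b})
      = (of_bool (a \<le> t \<and> t < b) :: real)"
    by auto
  ultimately show ?thesis
    unfolding S by (simp add: tendsto_eventually)
qed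

text \<open>Points of R^I are functions, which are not a \<^class>\<open>real_vector\<close> instance, so convexity
  is spelled out coordinatewise.\<close>

definition fconvex :: "('i \<Rightarrow> real) set \<Rightarrow> bool" where
  "fconvex Q \<longleftrightarrow>
     (\<forall>y1\<in>Q. \<forall>y2\<in>Q. \<forall>u::real. 0 \<le> u \<and> u \<le> 1 \<longrightarrow> (\<lambda>j. (1 - u) * y1 j + u * y2 j) \<in> Q)"

lemma fconvex_Int: "fconvex P \<Longrightarrow> fconvex Q \<Longrightarrow> fconvex (P \<inter> Q)"
  unfolding fconvex_def by blast

lemma sum_convex_combination:
  "(\<Sum>j\<in>A. (1 - u) * y1 j + u * y2 j) = (1 - u) * sum y1 A + u * (sum y2 A :: real)"
  by (simp add: sum.distrib sum_distrib_left)

lemma closed_agree_off: "closed {y :: 'i \<Rightarrow> real. \<forall>j. j \<notin> F \<longrightarrow> y j = x j}"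
  by (intro closed_Collect_all closed_Collect_imp open_Collect_neg closed_Collect_eq
      continuous_on_product_coordinates continuous_on_const) (simp_all add: closed_Collect_neg)

lemma coordinate_slice_compact_interval:
  fixes Q :: "('i \<Rightarrow> real) set" and x :: "'i \<Rightarrow> real" and i :: 'i and F :: "'i set"
  assumes "compact Q" and "fconvex Q"
  defines "S \<equiv> (\<lambda>y. y i) ` (Q \<inter> {y. \<forall>j. j \<notin> F \<longrightarrow> y j = x j})"
  shows "compact S" and "is_interval S"
proof -
  show "compact S"
    unfolding S_def using assms(1) closed_agree_off
    by (intro compact_continuous_image compact_Int_closed
        continuous_on_subset[OF continuous_on_product_coordinates subset_UNIV])
  have "convex S"
    unfolding convex_alt
  proof (intro ballI allI impI)
    fix a b u :: real assume "a \<in> S" "b \<in> S" and u: "0 \<le> u \<and> u \<le> 1"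
    then obtain ya yb where "ya \<in> Q" "yb \<in> Q" "ya i = a" "yb i = b"
      and "\<forall>j. j \<notin> F \<longrightarrow> ya j = x j" "\<forall>j. j \<notin> F \<longrightarrow> yb j = x j"
      unfolding S_def by auto
    with assms(2) u show "(1 - u) *\<^sub>R a + u *\<^sub>R b \<in> S"
      unfolding S_def fconvex_def
      by (intro image_eqI[of _ _ "\<lambda>j. (1 - u) * ya j + u * yb j"]) (auto simp: algebra_simps)
  qed
  then show "is_interval S"
    by (simp add: is_interval_convex_1)
qed

section \<open>Hadwiger's Euler characteristic\<close>

text \<open>If infinitely many jumps are nonzero, \<^const>\<open>Sum_any\<close> returns the junk value 0; for
  combinations of compact convex sets only finitely many are.\<close>

fun hadwiger :: "'i list \<Rightarrow> (('i \<Rightarrow> real) \<Rightarrow> real) \<Rightarrow> ('i \<Rightarrow> real) \<Rightarrow> real" where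
  "hadwiger [] h x = h x"
| "hadwiger (i # js) h x = Sum_any (right_jump (\<lambda>s. hadwiger js h (x(i := s))))"

lemma hadwiger_combination:
  fixes Q :: "'k \<Rightarrow> ('i \<Rightarrow> real) set"
  assumes "distinct xs" and "finite K" and "\<And>k. k \<in> K \<Longrightarrow> compact (Q k) \<and> fconvex (Q k)"
  shows "hadwiger xs (\<lambda>y. \<Sum>k\<in>K. c k * indicator (Q k) y) x =
    (\<Sum>k\<in>K. c k * of_bool (\<exists>y\<in>Q k. \<forall>j. j \<notin> set xs \<longrightarrow> y j = x j))"
  using assms(1)
proof (induction xs arbitrary: x)
  case Nil
  have "(\<exists>y\<in>Q k. \<forall>j. y j = x j) \<longleftrightarrow> x \<in> Q k" for k
    by (metis ext)
  then show ?case
    by (simp add: indicator_def)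
next
  case (Cons i js)
  let ?h = "\<lambda>y. \<Sum>k\<in>K. c k * indicator (Q k) y"
  define S where "S k = (\<lambda>y. y i) ` (Q k \<inter> {y. \<forall>j. j \<notin> set (i # js) \<longrightarrow> y j = x j})" for k
  have pointwise: "(\<forall>j. j \<notin> set js \<longrightarrow> y j = (x(i := s)) j) \<longleftrightarrow>
      y i = s \<and> (\<forall>j. j \<notin> set (i # js) \<longrightarrow> y j = x j)" for y s
    using Cons.prems by auto
  have slice: "(\<exists>y\<in>Q k. \<forall>j. j \<notin> set js \<longrightarrow> y j = (x(i := s)) j) \<longleftrightarrow> s \<in> S k" for k s
    unfolding S_def pointwise by blast
  have restrict: "hadwiger js ?h (x(i := s)) = (\<Sum>k\<in>K. c k * indicator (S k) s)" for s
  proof -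
    have "distinct js" using Cons.prems by simp
    then have "hadwiger js ?h (x(i := s)) =
        (\<Sum>k\<in>K. c k * of_bool (\<exists>y\<in>Q k. \<forall>j. j \<notin> set js \<longrightarrow> y j = (x(i := s)) j))"
      by (rule Cons.IH)
    then show ?thesis by (simp only: slice indicator_def)
  qed
  have "compact (S k) \<and> is_interval (S k)" if "k \<in> K" for k
    using assms(3)[OF that] unfolding S_def
    by (intro conjI coordinate_slice_compact_interval) simp_all
  then have "right_jump (\<lambda>s. \<Sum>k\<in>K. c k * indicator (S k) s) t =
      (\<Sum>k\<in>K. c k * (indicator (S k) t - (indicator (S k) t - of_bool (S k \<noteq> {} \<and> t = Sup (S k)))))" for t
    by (intro right_jump_sum[OF assms(2)] tendsto_indicator_compact_interval_at_right) blast+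
  then have jump: "right_jump (\<lambda>s. hadwiger js ?h (x(i := s))) =
      (\<lambda>t. \<Sum>k\<in>K. c k * of_bool (S k \<noteq> {} \<and> t = Sup (S k)))"
    by (simp add: restrict fun_eq_iff)
  have "hadwiger (i # js) ?h x = Sum_any (\<lambda>t. \<Sum>k\<in>K. c k * of_bool (S k \<noteq> {} \<and> t = Sup (S k)))"
    by (simp only: hadwiger.simps jump)
  also have "\<dots> = (\<Sum>k\<in>K. c k * of_bool (S k \<noteq> {}))"
    using assms(2) by (rule Sum_any_sum_point_masses)
  also have "\<dots> = (\<Sum>k\<in>K. c k * of_bool (\<exists>y\<in>Q k. \<forall>j. j \<notin> set (i # js) \<longrightarrow> y j = x j))"
    by (simp only: S_def image_is_empty Int_Collect ex_in_conv[symmetric] Bex_def)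
  finally show ?case .
qed

definition euler_char :: "(('i::finite \<Rightarrow> real) \<Rightarrow> real) \<Rightarrow> real" where
  "euler_char h = hadwiger (SOME xs. distinct xs \<and> set xs = UNIV) h (\<lambda>_. 0)"

lemma euler_char_combination:
  fixes Q :: "'k \<Rightarrow> ('i::finite \<Rightarrow> real) set"
  assumes "finite K" and "\<And>k. k \<in> K \<Longrightarrow> compact (Q k) \<and> fconvex (Q k)"
  shows "euler_char (\<lambda>y. \<Sum>k\<in>K. c k * indicator (Q k) y) = (\<Sum>k\<in>K. c k * of_bool (Q k \<noteq> {}))"
proof -
  have "\<exists>xs :: 'i list. distinct xs \<and> set xs = UNIV"
    using finite_distinct_list[OF finite_class.finite_UNIV] by metis
  then have "distinct (SOME xs :: 'i list. distinct xs \<and> set xs = UNIV)"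
      and "set (SOME xs :: 'i list. distinct xs \<and> set xs = UNIV) = UNIV"
    by (metis (mono_tags, lifting) someI_ex)+
  then show ?thesis
    unfolding euler_char_def using hadwiger_combination[OF _ assms] by (simp add: ex_in_conv)
qed

section \<open>The Tutte functional\<close>

definition level_set :: "('i::finite \<Rightarrow> real) set \<Rightarrow> real \<Rightarrow> ('i \<Rightarrow> real) set" where
  "level_set Q e = {y\<in>Q. sum y UNIV = e}"

definition level_max :: "('i::finite \<Rightarrow> real) set \<Rightarrow> 'i set \<Rightarrow> real \<Rightarrow> real" where
  "level_max Q A e = Sup ((\<lambda>y. sum y A) ` level_set Q e)"

definition level_halfspace :: "'i::finite set \<Rightarrow> real \<Rightarrow> real \<Rightarrow> ('i \<Rightarrow> real) set" where
  "level_halfspace A s e = {y. s \<le> sum y A \<and> sum y UNIV = e}"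

lemma continuous_on_sum_coordinates: "continuous_on S (\<lambda>y::'i::finite \<Rightarrow> real. sum y A)"
  by (intro continuous_on_sum continuous_on_subset[OF continuous_on_product_coordinates subset_UNIV])

lemma closed_level_halfspace: "closed (level_halfspace A s e)"
  unfolding level_halfspace_def
  by (intro closed_Collect_conj closed_Collect_le closed_Collect_eq
      continuous_on_sum_coordinates continuous_on_const)

lemma fconvex_level_halfspace: "fconvex (level_halfspace A s e)"
  unfolding fconvex_def level_halfspace_def
proof (intro ballI allI impI)
  fix y1 y2 :: "'a \<Rightarrow> real" and u :: real
  assume "y1 \<in> {y. s \<le> sum y A \<and> sum y UNIV = e}" "y2 \<in> {y. s \<le> sum y A \<and> sum y UNIV = e}"
    and u: "0 \<le> u \<and> u \<le> 1"
  then have "(1 - u) * s + u * s \<le> (1 - u) * sum y1 A + u * sum y2 A"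
    by (intro add_mono mult_left_mono) auto
  with \<open>y1 \<in> _\<close> \<open>y2 \<in> _\<close> show "(\<lambda>j. (1 - u) * y1 j + u * y2 j) \<in> {y. s \<le> sum y A \<and> sum y UNIV = e}"
    unfolding mem_Collect_eq sum_convex_combination by (auto simp: algebra_simps)
qed

lemma level_halfspace_meets_iff:
  assumes "compact Q"
  shows "Q \<inter> level_halfspace A s e \<noteq> {} \<longleftrightarrow> level_set Q e \<noteq> {} \<and> s \<le> level_max Q A e"
proof (cases "level_set Q e = {}")
  case True
  then show ?thesis unfolding level_set_def level_halfspace_def by auto
next
  case False
  have "level_set Q e = Q \<inter> {y. sum y UNIV = e}"
    unfolding level_set_def by auto
  then have "compact ((\<lambda>y. sum y A) ` level_set Q e)"
    using assms by (auto intro!: compact_continuous_image continuous_on_sum_coordinates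
        closed_Collect_eq continuous_on_const)
  then obtain y0 where y0: "y0 \<in> level_set Q e" "\<And>y. y \<in> level_set Q e \<Longrightarrow> sum y A \<le> sum y0 A"
    using False compact_attains_sup[of "(\<lambda>y. sum y A) ` level_set Q e"] by auto
  then have "level_max Q A e = sum y0 A"
    unfolding level_max_def by (intro cSup_eq_maximum) auto
  with y0 show ?thesis
    unfolding level_set_def level_halfspace_def by (auto dest: order_trans)
qed

definition tutte_functional :: "(('i::finite \<Rightarrow> real) \<Rightarrow> real) \<Rightarrow> Ralg" where
  "tutte_functional h = (\<lambda>(a, b, c, d). \<Sum>A\<in>UNIV. if card A = a \<and> card (UNIV - A) = b
     then right_jump (\<lambda>s. euler_char (\<lambda>y. h y * indicator (level_halfspace A s (c + d)) y)) c
     else 0)"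

definition tutte_char_ext :: "('i::finite \<Rightarrow> real) set \<Rightarrow> Ralg" where
  "tutte_char_ext Q = (\<lambda>(a, b, c, d). \<Sum>A\<in>UNIV. of_bool (card A = a \<and> card (UNIV - A) = b \<and>
     level_set Q (c + d) \<noteq> {} \<and> c = level_max Q A (c + d)))"

lemma right_jump_euler_char_level_halfspace:
  fixes Q :: "'k \<Rightarrow> ('i::finite \<Rightarrow> real) set"
  assumes "finite K" and "\<And>k. k \<in> K \<Longrightarrow> compact (Q k) \<and> fconvex (Q k)"
  shows "right_jump (\<lambda>s. euler_char (\<lambda>y. (\<Sum>k\<in>K. c k * indicator (Q k) y) *
      indicator (level_halfspace A s e) y)) t =
    (\<Sum>k\<in>K. c k * of_bool (level_set (Q k) e \<noteq> {} \<and> t = level_max (Q k) A e))"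
proof -
  define f :: "'k \<Rightarrow> real \<Rightarrow> real"
    where "f k s = of_bool (level_set (Q k) e \<noteq> {}) * indicator {..level_max (Q k) A e} s" for k s
  have euler: "euler_char (\<lambda>y. (\<Sum>k\<in>K. c k * indicator (Q k) y) * indicator (level_halfspace A s e) y) =
      (\<Sum>k\<in>K. c k * f k s)" for s
  proof -
    have "(\<lambda>y. (\<Sum>k\<in>K. c k * indicator (Q k) y) * indicator (level_halfspace A s e) y) =
        (\<lambda>y. \<Sum>k\<in>K. c k * indicator (Q k \<inter> level_halfspace A s e) y)"
      by (simp add: fun_eq_iff sum_distrib_right indicator_inter_arith mult.assoc)
    moreover have "euler_char (\<lambda>y. \<Sum>k\<in>K. c k * indicator (Q k \<inter> level_halfspace A s e) y) =
        (\<Sum>k\<in>K. c k * of_bool (Q k \<inter> level_halfspace A s e \<noteq> {}))"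
      using assms by (intro euler_char_combination)
        (simp_all add: compact_Int_closed closed_level_halfspace fconvex_Int fconvex_level_halfspace)
    moreover have "(\<Sum>k\<in>K. c k * of_bool (Q k \<inter> level_halfspace A s e \<noteq> {})) = (\<Sum>k\<in>K. c k * f k s)"
      using assms(2) by (intro sum.cong refl) (simp add: level_halfspace_meets_iff f_def)
    ultimately show ?thesis
      by simp
  qed
  have "(f k \<longlongrightarrow> of_bool (level_set (Q k) e \<noteq> {}) * of_bool (t < level_max (Q k) A e)) (at_right t)" for k
    unfolding f_def by (intro tendsto_mult tendsto_const tendsto_indicator_atMost_at_right)
  then have "right_jump (\<lambda>s. \<Sum>k\<in>K. c k * f k s) t = (\<Sum>k\<in>K. c k *
      (f k t - of_bool (level_set (Q k) e \<noteq> {}) * of_bool (t < level_max (Q k) A e)))"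
    by (rule right_jump_sum[OF assms(1)])
  also have "\<dots> = (\<Sum>k\<in>K. c k * of_bool (level_set (Q k) e \<noteq> {} \<and> t = level_max (Q k) A e))"
    by (intro sum.cong refl) (auto simp: f_def)
  finally show ?thesis
    by (simp only: euler)
qed

lemma tutte_functional_combination:
  fixes Q :: "'k \<Rightarrow> ('i::finite \<Rightarrow> real) set"
  assumes "finite K" and "\<And>k. k \<in> K \<Longrightarrow> compact (Q k) \<and> fconvex (Q k)"
  shows "tutte_functional (\<lambda>y. \<Sum>k\<in>K. c k * indicator (Q k) y) =
    (\<lambda>m. \<Sum>k\<in>K. c k * tutte_char_ext (Q k) m)"
proof
  fix m :: monom
  obtain a b r d where m: "m = (a, b, r, d)"
    by (cases m)
  have "tutte_functional (\<lambda>y. \<Sum>k\<in>K. c k * indicator (Q k) y) m =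
      (\<Sum>A\<in>UNIV. \<Sum>k\<in>K. c k * of_bool (card A = a \<and> card (UNIV - A) = b \<and>
        level_set (Q k) (r + d) \<noteq> {} \<and> r = level_max (Q k) A (r + d)))"
    unfolding m tutte_functional_def
    by (auto simp: right_jump_euler_char_level_halfspace[OF assms] intro!: sum.cong)
  also have "\<dots> = (\<Sum>k\<in>K. c k * tutte_char_ext (Q k) m)"
    unfolding m tutte_char_ext_def prod.case sum_distrib_left by (rule sum.swap)
  finally show "tutte_functional (\<lambda>y. \<Sum>k\<in>K. c k * indicator (Q k) y) m =
      (\<Sum>k\<in>K. c k * tutte_char_ext (Q k) m)" .
qed

section \<open>Generalized permutahedra\<close>

lemma submodular_greedy_vector:
  fixes z :: "'i set \<Rightarrow> real"
  assumes "submodular z" and "z {} = 0" and "finite T"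
  shows "\<exists>x. sum x T = z T \<and> (\<forall>A \<subseteq> T. sum x A \<le> z A)"
  using assms(3)
proof (induction T rule: finite_induct)
  case empty
  show ?case
    using assms(2) by (intro exI[of _ "\<lambda>_. 0"]) simp
next
  case (insert v T)
  then obtain x where x: "sum x T = z T" "\<And>A. A \<subseteq> T \<Longrightarrow> sum x A \<le> z A"
    by blast
  define x' where "x' = x(v := z (insert v T) - z T)"
  have same: "sum x' A = sum x A" if "A \<subseteq> T" for A
    using that insert.hyps(2) unfolding x'_def by (intro sum.cong) auto
  have "sum x' A \<le> z A" if A: "A \<subseteq> insert v T" for A
  proof (cases "v \<in> A")
    case False
    then show ?thesis
      using A same x(2) by (simp add: subset_insert)
  next
    case True
    define A' where "A' = A - {v}"
    have A': "A' \<subseteq> T" "A = insert v A'" "v \<notin> A'" "finite A'"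
      using A True insert.hyps unfolding A'_def by (auto intro: finite_subset)
    have "A \<union> T = insert v T" "A \<inter> T = A'"
      using A' insert.hyps(2) by auto
    then have "z (insert v T) + z A' \<le> z A + z T"
      using assms(1) unfolding submodular_def by metis
    then show ?thesis
      using A' same x(2)[of A'] by (simp add: x'_def)
  qed
  moreover have "sum x' (insert v T) = z (insert v T)"
    using insert.hyps same[of T] x(1) by (simp add: x'_def)
  ultimately show ?case
    by blast
qed

lemma gen_perm_of_nonempty:
  assumes "submodular z" and "z {} = 0"
  shows "gen_perm_of (z :: 'i::finite set \<Rightarrow> real) \<noteq> {}"
  using submodular_greedy_vector[OF assms finite_class.finite_UNIV] unfolding gen_perm_of_def by auto

lemma closed_gen_perm_of: "closed (gen_perm_of (z :: 'i::finite set \<Rightarrow> real))"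
  unfolding gen_perm_of_def
  by (intro closed_Collect_conj closed_Collect_all closed_Collect_le closed_Collect_eq
      continuous_on_sum_coordinates continuous_on_const)

lemma gen_perm_of_coordinate_bound:
  fixes z :: "'i::finite set \<Rightarrow> real"
  assumes "x \<in> gen_perm_of z"
  shows "\<bar>x i\<bar> \<le> \<bar>z UNIV\<bar> + (\<Sum>j\<in>UNIV. \<bar>z {j}\<bar>)"
proof -
  have le: "x j \<le> \<bar>z {j}\<bar>" for j
  proof -
    have "sum x {j} \<le> z {j}"
      using assms unfolding gen_perm_of_def by blast
    then show ?thesis
      using abs_ge_self[of "z {j}"] by simp
  qed
  have "\<bar>z {i}\<bar> \<le> (\<Sum>j\<in>UNIV. \<bar>z {j}\<bar>)"
    by (rule member_le_sum) auto
  moreover have "z UNIV = x i + sum x (UNIV - {i})"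
    using assms sum.remove[of UNIV i x] unfolding gen_perm_of_def by simp
  moreover have "sum x (UNIV - {i}) \<le> (\<Sum>j\<in>UNIV - {i}. \<bar>z {j}\<bar>)"
    by (rule sum_mono) (rule le)
  moreover have "(\<Sum>j\<in>UNIV - {i}. \<bar>z {j}\<bar>) \<le> (\<Sum>j\<in>UNIV. \<bar>z {j}\<bar>)"
    by (rule sum_mono2) auto
  ultimately show ?thesis
    using le[of i] by linarith
qed

lemma compact_gen_perm_of: "compact (gen_perm_of (z :: 'i::finite set \<Rightarrow> real))"
proof -
  define B where "B = \<bar>z UNIV\<bar> + (\<Sum>j\<in>UNIV. \<bar>z {j}\<bar>)"
  have "compactin (product_topology (\<lambda>_::'i. euclidean) UNIV) (PiE UNIV (\<lambda>_::'i. {-B..B}))"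
    by (simp add: compactin_PiE)
  then have "compact (PiE UNIV (\<lambda>_::'i. {-B..B}) \<inter> gen_perm_of z)"
    by (intro compact_Int_closed closed_gen_perm_of) (simp add: euclidean_product_topology)
  moreover have "gen_perm_of z \<subseteq> PiE UNIV (\<lambda>_::'i. {-B..B})"
  proof
    fix x assume "x \<in> gen_perm_of z"
    then have "\<bar>x i\<bar> \<le> B" for i
      unfolding B_def by (rule gen_perm_of_coordinate_bound)
    then have "x i \<in> {-B..B}" for i
      using abs_le_iff[of "x i" B] by auto
    then show "x \<in> PiE UNIV (\<lambda>_. {-B..B})"
      by (simp add: PiE_iff)
  qed
  ultimately show ?thesis
    by (simp add: Int_absorb1)
qed

lemma fconvex_gen_perm_of: "fconvex (gen_perm_of (z :: 'i::finite set \<Rightarrow> real))"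
  unfolding fconvex_def
proof (intro ballI allI impI)
  fix y1 y2 :: "'i \<Rightarrow> real" and u :: real
  assume y: "y1 \<in> gen_perm_of z" "y2 \<in> gen_perm_of z" and u: "0 \<le> u \<and> u \<le> 1"
  have "(1 - u) * sum y1 A + u * sum y2 A \<le> (1 - u) * z A + u * z A" for A
    using y u unfolding gen_perm_of_def by (intro add_mono mult_left_mono) auto
  with y show "(\<lambda>j. (1 - u) * y1 j + u * y2 j) \<in> gen_perm_of z"
    unfolding gen_perm_of_def mem_Collect_eq sum_convex_combination by (auto simp: algebra_simps)
qed

lemma is_gen_perm_compact_fconvex: "is_gen_perm P \<Longrightarrow> compact P \<and> fconvex P"
  unfolding is_gen_perm_def using compact_gen_perm_of fconvex_gen_perm_of by blast

lemma tutte_char_ext_gen_perm: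
  assumes "is_gen_perm P"
  shows "tutte_char_ext P = tutte_char P"
proof
  fix m :: monom
  obtain a b r d where m: "m = (a, b, r, d)"
    by (cases m)
  obtain z where z: "submodular z" "z {} = 0" "P = gen_perm_of z"
    using assms unfolding is_gen_perm_def by blast
  have level: "level_set P e = (if e = z UNIV then P else {})" for e
    unfolding level_set_def z(3) gen_perm_of_def by auto
  have "P \<noteq> {}"
    using gen_perm_of_nonempty z by simp
  moreover have "sum y UNIV = z UNIV" if "y \<in> P" for y
    using that unfolding z(3) gen_perm_of_def by simp
  ultimately have mu_UNIV: "mu P UNIV = z UNIV"
    unfolding mu_def by simp
  have "of_bool (card A = a \<and> card (UNIV - A) = b \<and>
      level_set P (r + d) \<noteq> {} \<and> r = level_max P A (r + d)) =
    R_monomial (card A) (card (UNIV - A)) (mu P A) (mu P UNIV - mu P A) (a, b, r, d)" for A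
    using \<open>P \<noteq> {}\<close> unfolding R_monomial_def level_max_def mu_def mu_UNIV level
    by (auto simp: mu_UNIV[unfolded mu_def])
  then show "tutte_char_ext P m = tutte_char P m"
    unfolding m tutte_char_ext_def tutte_char_def prod.case by presburger
qed

lemma tutte_functional_gen_perm_combination:
  fixes P :: "'k \<Rightarrow> ('i::finite \<Rightarrow> real) set"
  assumes "finite K" and "\<forall>k\<in>K. is_gen_perm (P k)"
  shows "tutte_functional (\<lambda>y. \<Sum>k\<in>K. c k * indicator (P k) y) =
    (\<lambda>m. \<Sum>k\<in>K. c k * tutte_char (P k) m)"
proof -
  have "compact (P k) \<and> fconvex (P k)" if "k \<in> K" for k
    using that assms(2) by (simp add: is_gen_perm_compact_fconvex)
  then have "tutte_functional (\<lambda>y. \<Sum>k\<in>K. c k * indicator (P k) y) =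
      (\<lambda>m. \<Sum>k\<in>K. c k * tutte_char_ext (P k) m)"
    by (rule tutte_functional_combination[OF assms(1)])
  also have "\<dots> = (\<lambda>m. \<Sum>k\<in>K. c k * tutte_char (P k) m)"
    using assms(2) by (simp add: tutte_char_ext_gen_perm)
  finally show ?thesis .
qed

lemma tutte_functional_add:
  assumes "u \<in> gp_indicator_span" and "v \<in> gp_indicator_span"
  shows "tutte_functional (\<lambda>x. u x + v x) = (\<lambda>m. tutte_functional u m + tutte_functional v m)"
proof -
  obtain K1 :: "nat set" and c1 P1 where K1: "finite K1" "\<forall>k\<in>K1. is_gen_perm (P1 k)"
    and u: "u = (\<lambda>x. \<Sum>k\<in>K1. c1 k * indicator (P1 k) x)"
    using assms(1) unfolding gp_indicator_span_def by blast
  obtain K2 :: "nat set" and c2 P2 where K2: "finite K2" "\<forall>k\<in>K2. is_gen_perm (P2 k)"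
    and v: "v = (\<lambda>x. \<Sum>k\<in>K2. c2 k * indicator (P2 k) x)"
    using assms(2) unfolding gp_indicator_span_def by blast
  define c where "c = case_sum c1 c2"
  define P where "P = case_sum P1 P2"
  have K: "finite (K1 <+> K2)" "\<forall>k\<in>K1 <+> K2. is_gen_perm (P k)"
    using K1 K2 unfolding P_def by auto
  have "(\<lambda>x. u x + v x) = (\<lambda>x. \<Sum>k\<in>K1 <+> K2. c k * indicator (P k) x)"
    unfolding u v c_def P_def by (simp only: sum.Plus[OF K1(1) K2(1)] comp_def sum.case)
  then have "tutte_functional (\<lambda>x. u x + v x) = (\<lambda>m. \<Sum>k\<in>K1 <+> K2. c k * tutte_char (P k) m)"
    by (simp only: tutte_functional_gen_perm_combination[OF K])
  also have "\<dots> = (\<lambda>m. tutte_functional u m + tutte_functional v m)"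
    unfolding u v c_def P_def
    by (simp only: tutte_functional_gen_perm_combination[OF K1] tutte_functional_gen_perm_combination[OF K2]
        sum.Plus[OF K1(1) K2(1)] comp_def sum.case)
  finally show ?thesis .
qed

lemma tutte_functional_scale:
  assumes "u \<in> gp_indicator_span"
  shows "tutte_functional (\<lambda>x. a * u x) = (\<lambda>m. a * tutte_functional u m)"
proof -
  obtain K :: "nat set" and c P where K: "finite K" "\<forall>k\<in>K. is_gen_perm (P k)"
    and u: "u = (\<lambda>x. \<Sum>k\<in>K. c k * indicator (P k) x)"
    using assms unfolding gp_indicator_span_def by blast
  have "(\<lambda>x. a * u x) = (\<lambda>x. \<Sum>k\<in>K. (a * c k) * indicator (P k) x)"
    unfolding u by (simp only: sum_distrib_left mult.assoc)
  then have "tutte_functional (\<lambda>x. a * u x) = (\<lambda>m. \<Sum>k\<in>K. (a * c k) * tutte_char (P k) m)"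
    by (simp only: tutte_functional_gen_perm_combination[OF K])
  also have "\<dots> = (\<lambda>m. a * tutte_functional u m)"
    unfolding u by (simp only: tutte_functional_gen_perm_combination[OF K] sum_distrib_left mult.assoc)
  finally show ?thesis .
qed

theorem theorem6p4:
  shows "strong_valuation (tutte_char :: ('i::finite \<Rightarrow> real) set \<Rightarrow> Ralg)"
  unfolding strong_valuation_def
proof (intro exI conjI allI impI)
  show "linear_on_span (tutte_functional :: (('i \<Rightarrow> real) \<Rightarrow> real) \<Rightarrow> Ralg)"
    unfolding linear_on_span_def using tutte_functional_add tutte_functional_scale by blast
  fix P :: "('i \<Rightarrow> real) set"
  assume "is_gen_perm P"
  then show "tutte_char P = tutte_functional (indicator P)"
    using tutte_functional_gen_perm_combination[of "{()}" "\<lambda>_. P" "\<lambda>_. 1"] by simp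
qed

end
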